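(* Let $G=(V,q)$ be a reversible, stochastically complete graph and let $\widetilde G=(V\times V,\widetilde q)$ be a coupling graph of $G$ with heat semigroup $\widetilde P_t$. Let $W:=V^2\setminus\{(x,x):x\in V\}$ and suppose $\widetilde P_t1_W\to0$ pointwise as $t\to\infty$. Then every bounded function $\phi:V\to\mathbb R$ with $\Delta\phi=0$ is constant.
   Context: A graph $G=(V,q)$ consists of a countable set $V$ and a function $q:V\times V\to[0,\infty)$ such that $\#\{y:q(x,y)>0\}<\infty$ for every $x\in V$; its Laplacian is $\Delta f(x)=\sum_y q(x,y)(f(y)-f(x))$. $G$ is reversible if there is $m:V\to(0,\infty)$ with $q(x,y)m(x)=q(y,x)m(y)$. Heat semigroup of any graph: for finite $S$ let $q_S(x,y)=q(x,y)1_S(x)$ with Laplacian $\Delta_S$ and $P^S_tf=\sum_{k\ge0}t^k\Delta_S^k(f1_S)/k!$; for bounded $f$, $P_tf=\lim_iP_t^{S_i}f$ pointwise along any increasing exhaustion by finite sets. $G$ is stochastically complete if $P_t1=1$ for all $t\ge0$. $(f\otimes g)(x,y)=f(x)g(y)$. A coupling graph of $G$ is a graph $\widetilde G=(V\times V,\widetilde q)$ whose Laplacian satisfies $\widetilde\Delta(f\otimes 1)=\Delta f\otimes 1$ and $\widetilde\Delta(1\otimes f)=1\otimes\Delta f$ for all $f:V\to\mathbb R$. *)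

theory Defs
  imports "HOL-Analysis.Analysis"
begin

definition is_graph :: "('v \<Rightarrow> 'v \<Rightarrow> real) \<Rightarrow> bool" where
  "is_graph q \<longleftrightarrow> (\<forall>x y. 0 \<le> q x y) \<and> (\<forall>x. finite {y. 0 < q x y})"

definition lap :: "('v \<Rightarrow> 'v \<Rightarrow> real) \<Rightarrow> ('v \<Rightarrow> real) \<Rightarrow> 'v \<Rightarrow> real" where
  "lap q f x = (\<Sum>y\<in>{y. 0 < q x y}. q x y * (f y - f x))"

definition reversible :: "('v \<Rightarrow> 'v \<Rightarrow> real) \<Rightarrow> bool" where
  "reversible q \<longleftrightarrow> (\<exists>m. (\<forall>x. 0 < m x) \<and> (\<forall>x y. q x y * m x = q y x * m y))"

definition lapS :: "('v \<Rightarrow> 'v \<Rightarrow> real) \<Rightarrow> 'v set \<Rightarrow> ('v \<Rightarrow> real) \<Rightarrow> 'v \<Rightarrow> real" where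
  "lapS q S f = lap (\<lambda>x y. q x y * indicator S x) f"

definition heatS :: "('v \<Rightarrow> 'v \<Rightarrow> real) \<Rightarrow> 'v set \<Rightarrow> real \<Rightarrow> ('v \<Rightarrow> real) \<Rightarrow> 'v \<Rightarrow> real" where
  "heatS q S t f x = (\<Sum>k. t ^ k / fact k * ((lapS q S ^^ k) (\<lambda>y. f y * indicator S y)) x)"

definition exhaustion :: "(nat \<Rightarrow> 'v set) \<Rightarrow> bool" where
  "exhaustion S \<longleftrightarrow> (\<forall>i. finite (S i)) \<and> incseq S \<and> (\<Union>i. S i) = UNIV"

text \<open>Heat semigroup: pointwise limit along an increasing exhaustion by finite sets
 (the limit is independent of the exhaustion, so we fix one by choice).\<close>
definition heat :: "('v \<Rightarrow> 'v \<Rightarrow> real) \<Rightarrow> real \<Rightarrow> ('v \<Rightarrow> real) \<Rightarrow> 'v \<Rightarrow> real" where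
  "heat q t f x = lim (\<lambda>i. heatS q ((SOME S. exhaustion S) i) t f x)"

definition stoch_complete :: "('v \<Rightarrow> 'v \<Rightarrow> real) \<Rightarrow> bool" where
  "stoch_complete q \<longleftrightarrow> (\<forall>t\<ge>0. heat q t (\<lambda>_. 1) = (\<lambda>_. 1))"

definition coupling_graph :: "('v \<Rightarrow> 'v \<Rightarrow> real) \<Rightarrow> ('v \<times> 'v \<Rightarrow> 'v \<times> 'v \<Rightarrow> real) \<Rightarrow> bool" where
  "coupling_graph q qt \<longleftrightarrow> is_graph qt \<and>
     (\<forall>f. lap qt (\<lambda>(x, y). f x * 1) = (\<lambda>(x, y). lap q f x * 1)) \<and>
     (\<forall>f. lap qt (\<lambda>(x, y). 1 * f y) = (\<lambda>(x, y). 1 * lap q f y))"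

end

theory Submission
  imports Defs
begin

text \<open>
For a finite set \<open>S\<close> and a constant \<open>c \<ge> 0\<close> dominating the degrees on \<open>S\<close>, the operator
\<open>\<Delta>\<^sub>S + c\<close> is monotone, so \<open>exp (t \<Delta>\<^sub>S) = exp (-c t) exp (t (\<Delta>\<^sub>S + c))\<close> is a positive
operator on bounded functions; it fixes every harmonic function and every constant.

Let \<open>\<psi> (x, y) = \<phi> x - \<phi> y\<close>, harmonic for the coupling graph by the coupling identities,
bounded by \<open>M\<close> and zero on the diagonal. Then \<open>\<psi> \<le> M (1_W + 1 - 1_(S\<times>S))\<close>, and applying
the positive operator gives \<open>\<psi> \<le> M (P^(S\<times>S)_t 1_W + 1 - P^(S\<times>S)_t 1)\<close>. Comparing the
shifted iterates, the coupling identities bound the lost mass \<open>1 - P^(S\<times>S)_t 1\<close> at \<open>(x, y)\<close>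
by the sum of the lost masses \<open>1 - P^S_t 1\<close> at \<open>x\<close> and at \<open>y\<close>, which vanish as \<open>S\<close> exhausts
\<open>V\<close> by stochastic completeness. Hence \<open>\<psi> \<le> M P_t 1_W \<rightarrow> 0\<close>, and by symmetry \<open>\<psi> = 0\<close>.
\<close>

definition deg :: "('v \<Rightarrow> 'v \<Rightarrow> real) \<Rightarrow> 'v \<Rightarrow> real" where
  "deg q x = (\<Sum>y\<in>{y. 0 < q x y}. q x y)"

lemma lap_lin: "lap q (\<lambda>z. a * f z + b * g z) x = a * lap q f x + b * lap q g x"
proof -
  have "lap q (\<lambda>z. a * f z + b * g z) x
      = (\<Sum>y\<in>{y. 0 < q x y}. a * (q x y * (f y - f x)) + b * (q x y * (g y - g x)))"
    unfolding lap_def by (rule sum.cong) (auto simp: algebra_simps)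
  then show ?thesis unfolding lap_def by (simp add: sum.distrib sum_distrib_left)
qed

lemma lap_const [simp]: "lap q (\<lambda>_. a) x = 0"
  unfolding lap_def by simp

lemma lap_eq_sum_minus_deg: "lap q h x = (\<Sum>y\<in>{y. 0 < q x y}. q x y * h y) - deg q x * h x"
proof -
  have "lap q h x = (\<Sum>y\<in>{y. 0 < q x y}. q x y * h y - q x y * h x)"
    unfolding lap_def by (simp add: algebra_simps)
  then show ?thesis unfolding deg_def by (simp add: sum_subtractf sum_distrib_right)
qed

lemma lap_plus_mono:
  assumes "deg q x \<le> c" and "\<And>z. h z \<le> h' z"
  shows "lap q h x + c * h x \<le> lap q h' x + c * h' x"
proof -
  have "(\<Sum>y\<in>{y. 0 < q x y}. q x y * h y) \<le> (\<Sum>y\<in>{y. 0 < q x y}. q x y * h' y)"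
    by (rule sum_mono) (simp add: assms(2) mult_left_mono)
  moreover have "(c - deg q x) * h x \<le> (c - deg q x) * h' x"
    using assms by (simp add: mult_left_mono)
  ultimately show ?thesis unfolding lap_eq_sum_minus_deg by (simp add: algebra_simps)
qed

lemma finite_deg_bound: "finite S \<Longrightarrow> \<exists>c\<ge>0. \<forall>x\<in>S. deg q x \<le> c"
  by (rule exI[of _ "\<Sum>x\<in>S. \<bar>deg q x\<bar>"])
     (auto intro: order_trans[OF abs_ge_self member_le_sum[where f = "\<lambda>x. \<bar>deg q x\<bar>"]]
       simp: sum_nonneg)

lemma lapS_in: "x \<in> S \<Longrightarrow> lapS q S h x = lap q h x"
  unfolding lapS_def lap_def by simp

lemma lapS_out: "x \<notin> S \<Longrightarrow> lapS q S h x = 0"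
  unfolding lapS_def lap_def by simp

lemma lapS_lin: "lapS q S (\<lambda>z. a * f z + b * g z) = (\<lambda>z. a * lapS q S f z + b * lapS q S g z)"
  unfolding lapS_def by (rule ext) (rule lap_lin)

lemma coupling_graph_lap_fst:
  assumes "coupling_graph q qt"
  shows "lap qt (\<lambda>r. f (fst r)) r = lap q f (fst r)"
proof -
  have "lap qt (\<lambda>(x, y). f x * 1) r = (\<lambda>(x, y). lap q f x * 1) r"
    using assms unfolding coupling_graph_def by metis
  then show ?thesis by (simp add: case_prod_unfold)
qed

lemma coupling_graph_lap_snd:
  assumes "coupling_graph q qt"
  shows "lap qt (\<lambda>r. f (snd r)) r = lap q f (snd r)"
proof -
  have "lap qt (\<lambda>(x, y). 1 * f y) r = (\<lambda>(x, y). 1 * lap q f y) r"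
    using assms unfolding coupling_graph_def by metis
  then show ?thesis by (simp add: case_prod_unfold)
qed

lemma coupling_graph_lap_lin:
  assumes "coupling_graph q qt"
  shows "lap qt (\<lambda>r. a * f (fst r) + b * g (snd r)) r = a * lap q f (fst r) + b * lap q g (snd r)"
  using lap_lin[of qt a "\<lambda>r. f (fst r)" b "\<lambda>r. g (snd r)"]
  by (simp add: coupling_graph_lap_fst[OF assms] coupling_graph_lap_snd[OF assms])

definition shifted_lapS ::
    "('v \<Rightarrow> 'v \<Rightarrow> real) \<Rightarrow> 'v set \<Rightarrow> real \<Rightarrow> ('v \<Rightarrow> real) \<Rightarrow> 'v \<Rightarrow> real" where
  "shifted_lapS q S c h z = lapS q S h z + c * h z"

lemma shifted_lapS_in: "z \<in> S \<Longrightarrow> shifted_lapS q S c h z = lap q h z + c * h z"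
  by (simp add: shifted_lapS_def lapS_in)

lemma shifted_lapS_out: "z \<notin> S \<Longrightarrow> shifted_lapS q S c h z = c * h z"
  by (simp add: shifted_lapS_def lapS_out)

lemma funpow_shifted_lapS_const: "(shifted_lapS q S c ^^ k) (\<lambda>_. a) = (\<lambda>_. c ^ k * a)"
  by (induction k) (auto simp: shifted_lapS_def lapS_def)

lemma funpow_shifted_lapS_out: "z \<notin> S \<Longrightarrow> (shifted_lapS q S c ^^ k) h z = c ^ k * h z"
  by (induction k) (simp_all add: shifted_lapS_out)

lemma shifted_lapS_mono:
  assumes "\<forall>x\<in>S. deg q x \<le> c" and "0 \<le> c" and "\<And>z. h z \<le> h' z"
  shows "shifted_lapS q S c h z \<le> shifted_lapS q S c h' z"
  using assms
  by (cases "z \<in> S") (auto simp: shifted_lapS_in shifted_lapS_out lap_plus_mono mult_left_mono)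

lemma funpow_shifted_lapS_mono:
  assumes "\<forall>x\<in>S. deg q x \<le> c" and "0 \<le> c" and "\<And>z. h z \<le> h' z"
  shows "(shifted_lapS q S c ^^ k) h z \<le> (shifted_lapS q S c ^^ k) h' z"
  using assms(3)
  by (induction k arbitrary: z) (simp_all add: shifted_lapS_mono[OF assms(1,2)])

lemma funpow_shifted_lapS_between:
  assumes "\<forall>x\<in>S. deg q x \<le> c" and "0 \<le> c" and "\<And>z. a \<le> h z" and "\<And>z. h z \<le> b"
  shows "c ^ k * a \<le> (shifted_lapS q S c ^^ k) h z \<and> (shifted_lapS q S c ^^ k) h z \<le> c ^ k * b"
  using funpow_shifted_lapS_mono[OF assms(1,2), of "\<lambda>_. a" h k z]
    funpow_shifted_lapS_mono[OF assms(1,2), of h "\<lambda>_. b" k z] assms(3,4)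
  by (simp add: funpow_shifted_lapS_const)

lemma funpow_shifted_lapS_subset_le:
  assumes "S \<subseteq> S'" and deg: "\<forall>x\<in>S'. deg q x \<le> c" and c: "0 \<le> c"
    and "\<And>z. g z \<le> g' z" and "\<And>z. z \<notin> S \<Longrightarrow> g z = 0" and "\<And>z. 0 \<le> g' z"
  shows "(shifted_lapS q S c ^^ k) g z \<le> (shifted_lapS q S' c ^^ k) g' z"
proof (induction k arbitrary: z)
  case 0
  show ?case using assms(4) by simp
next
  case (Suc k)
  define u where "u = (shifted_lapS q S c ^^ k) g"
  define v where "v = (shifted_lapS q S' c ^^ k) g'"
  have u_out: "u z = 0" if "z \<notin> S" for z
    using that assms(5) by (simp add: u_def funpow_shifted_lapS_out)
  have v_nonneg: "0 \<le> v z" for z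
    using funpow_shifted_lapS_mono[OF deg c, of "\<lambda>_. 0" g' k z] assms(6)
    unfolding v_def by (simp add: funpow_shifted_lapS_const)
  consider "z \<in> S" | "z \<notin> S" "z \<in> S'" | "z \<notin> S'" using assms(1) by blast
  then have "shifted_lapS q S c u z \<le> shifted_lapS q S' c v z"
  proof cases
    case 1
    then have "z \<in> S'" using assms(1) by blast
    then show ?thesis using 1 deg Suc.IH
      by (simp add: shifted_lapS_in u_def v_def lap_plus_mono)
  next
    case 2
    have "lap q (\<lambda>_. 0) z + c * 0 \<le> lap q v z + c * v z"
      using 2 deg v_nonneg by (intro lap_plus_mono) auto
    then show ?thesis using 2 u_out by (simp add: shifted_lapS_in shifted_lapS_out)
  next
    case 3
    then have "z \<notin> S" using assms(1) by blast
    then show ?thesis using 3 u_out v_nonneg c by (simp add: shifted_lapS_out)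
  qed
  then show ?case by (simp add: u_def v_def)
qed

lemma shifted_lapS_coupling:
  assumes "coupling_graph q qt" and "p \<in> S \<times> S"
  shows "shifted_lapS qt (S \<times> S) c (\<lambda>r. u (fst r) + u (snd r)) p
       = shifted_lapS q S c u (fst p) + shifted_lapS q S c u (snd p)"
  using assms(2) coupling_graph_lap_lin[OF assms(1), of 1 u 1 u p]
  by (auto simp: shifted_lapS_in algebra_simps)

text \<open>Off \<open>S \<times> S\<close> one coordinate lies outside \<open>S\<close>, where the right-hand side already
  attains the maximal value \<open>c ^ k\<close>.\<close>

lemma funpow_shifted_lapS_coupling_le:
  assumes coupling: "coupling_graph q qt"
    and deg: "\<forall>x\<in>S. deg q x \<le> c" and deg': "\<forall>p\<in>S \<times> S. deg qt p \<le> c" and c: "0 \<le> c"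
  shows "(shifted_lapS qt (S \<times> S) c ^^ k) (\<lambda>r. 1 - indicator (S \<times> S) r) p
      \<le> (shifted_lapS q S c ^^ k) (\<lambda>z. 1 - indicator S z) (fst p)
       + (shifted_lapS q S c ^^ k) (\<lambda>z. 1 - indicator S z) (snd p)"
proof (induction k arbitrary: p)
  case 0
  show ?case by (cases p) (auto simp: indicator_def)
next
  case (Suc k)
  define u where "u = (shifted_lapS q S c ^^ k) (\<lambda>z. 1 - indicator S z)"
  define v where "v = (shifted_lapS qt (S \<times> S) c ^^ k) (\<lambda>r. 1 - indicator (S \<times> S) r)"
  have u_bounds: "0 \<le> (shifted_lapS q S c ^^ j) (\<lambda>z. 1 - indicator S z) z" for j z
    using funpow_shifted_lapS_between[OF deg c, of 0 "\<lambda>z. 1 - indicator S z" 1 j z]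
    by (simp add: indicator_def)
  show ?case
  proof (cases "p \<in> S \<times> S")
    case True
    have "shifted_lapS qt (S \<times> S) c v p \<le> shifted_lapS qt (S \<times> S) c (\<lambda>r. u (fst r) + u (snd r)) p"
      using Suc.IH unfolding u_def v_def by (intro shifted_lapS_mono[OF deg' c])
    then show ?thesis
      by (simp add: u_def v_def shifted_lapS_coupling[OF coupling True])
  next
    case False
    then have "fst p \<notin> S \<or> snd p \<notin> S" by (cases p) auto
    then have "c ^ Suc k \<le> (shifted_lapS q S c ^^ Suc k) (\<lambda>z. 1 - indicator S z) (fst p)
        + (shifted_lapS q S c ^^ Suc k) (\<lambda>z. 1 - indicator S z) (snd p)"
      using u_bounds[of "Suc k"]
      by (auto simp: funpow_shifted_lapS_out add_increasing add_increasing2 simp del: funpow.simps)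
    then show ?thesis using False by (simp add: funpow_shifted_lapS_out del: funpow.simps)
  qed
qed

lemma binomial_shift_step:
  fixes b :: "nat \<Rightarrow> real"
  shows "(\<Sum>j\<le>Suc k. real (Suc k choose j) * (-c) ^ (Suc k - j) * b j)
       = (\<Sum>j\<le>k. real (k choose j) * (-c) ^ (k - j) * (b (Suc j) - c * b j))"
proof -
  have shift: "(\<Sum>j\<le>Suc k. real (Suc k choose j) * (-c) ^ (Suc k - j) * b j)
      = (-c) ^ Suc k * b 0 + (\<Sum>j\<le>k. real (k choose j) * (-c) ^ (k - j) * b (Suc j))
        + (\<Sum>j\<le>k. real (k choose Suc j) * (-c) ^ (k - j) * b (Suc j))"
    by (subst sum.atMost_Suc_shift) (simp add: sum.distrib algebra_simps del: sum.atMost_Suc)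
  have "(\<Sum>j\<le>k. real (k choose j) * (-c) ^ (k - j) * (- c * b j))
      = (\<Sum>j\<le>k. real (k choose j) * (-c) ^ (Suc k - j) * b j)"
    by (rule sum.cong) (auto simp: Suc_diff_le)
  also have "\<dots> = (\<Sum>j\<le>Suc k. real (k choose j) * (-c) ^ (Suc k - j) * b j)"
    by simp
  also have "\<dots> = (-c) ^ Suc k * b 0 + (\<Sum>j\<le>k. real (k choose Suc j) * (-c) ^ (k - j) * b (Suc j))"
    by (subst sum.atMost_Suc_shift) simp
  finally have "(\<Sum>j\<le>k. real (k choose j) * (-c) ^ (k - j) * (- c * b j))
      = (-c) ^ Suc k * b 0 + (\<Sum>j\<le>k. real (k choose Suc j) * (-c) ^ (k - j) * b (Suc j))" .
  moreover have "(\<Sum>j\<le>k. real (k choose j) * (-c) ^ (k - j) * (b (Suc j) - c * b j))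
      = (\<Sum>j\<le>k. real (k choose j) * (-c) ^ (k - j) * b (Suc j))
        + (\<Sum>j\<le>k. real (k choose j) * (-c) ^ (k - j) * (- c * b j))"
    unfolding sum.distrib[symmetric] by (rule sum.cong) (simp_all add: algebra_simps)
  ultimately show ?thesis unfolding shift by linarith
qed

lemma linear_fun_sum:
  fixes L :: "('a \<Rightarrow> real) \<Rightarrow> 'a \<Rightarrow> real"
  assumes lin: "\<And>a b f g. L (\<lambda>z. a * f z + b * g z) = (\<lambda>z. a * L f z + b * L g z)"
    and "finite J"
  shows "L (\<lambda>z. \<Sum>j\<in>J. w j * G j z) = (\<lambda>z. \<Sum>j\<in>J. w j * L (G j) z)"
  using assms(2)
proof (induction J rule: finite_induct)
  case empty
  then show ?case using lin[of 0 "\<lambda>_. 0" 0 "\<lambda>_. 0"] by simp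
next
  case (insert x J)
  then show ?case using lin[of "w x" "G x" 1 "\<lambda>z. \<Sum>j\<in>J. w j * G j z"] by simp
qed

lemma funpow_linear:
  fixes L :: "('a \<Rightarrow> real) \<Rightarrow> 'a \<Rightarrow> real"
  assumes lin: "\<And>a b f g. L (\<lambda>z. a * f z + b * g z) = (\<lambda>z. a * L f z + b * L g z)"
  shows "(L ^^ k) (\<lambda>z. a * f z + b * g z) = (\<lambda>z. a * (L ^^ k) f z + b * (L ^^ k) g z)"
  by (induction k) (simp_all add: lin)

text \<open>The binomial expansion of \<open>L ^ k = ((L + c) - c) ^ k\<close>.\<close>

lemma funpow_eq_binomial_shift:
  fixes L :: "('a \<Rightarrow> real) \<Rightarrow> 'a \<Rightarrow> real"
  assumes lin: "\<And>a b f g. L (\<lambda>z. a * f z + b * g z) = (\<lambda>z. a * L f z + b * L g z)"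
  shows "(L ^^ k) g = (\<lambda>z. \<Sum>j\<le>k. real (k choose j) * (-c) ^ (k - j)
                          * (((\<lambda>h z. L h z + c * h z) ^^ j) g z))"
proof (induction k)
  case 0
  then show ?case by simp
next
  case (Suc k)
  define B where "B = (\<lambda>h z. L h z + c * h z)"
  have "(L ^^ Suc k) g = L (\<lambda>z. \<Sum>j\<le>k. (real (k choose j) * (-c) ^ (k - j)) * (B ^^ j) g z)"
    using Suc by (simp add: B_def mult.assoc)
  also have "\<dots> = (\<lambda>z. \<Sum>j\<le>k. (real (k choose j) * (-c) ^ (k - j)) * L ((B ^^ j) g) z)"
    by (rule linear_fun_sum[OF lin]) simp
  also have "\<dots> = (\<lambda>z. \<Sum>j\<le>Suc k. real (Suc k choose j) * (-c) ^ (Suc k - j) * (B ^^ j) g z)"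
    unfolding binomial_shift_step by (simp add: B_def mult.assoc)
  finally show ?case unfolding B_def .
qed

lemma exp_sums_weighted_power: "(\<lambda>k. t ^ k / fact k * a ^ k) sums exp (a * t)"
  for t a :: real
  using exp_converges[of "a * t"]
  by (simp add: divide_inverse power_mult_distrib mult_ac)

text \<open>\<open>exp (t L) = exp (-c t) exp (t (L + c))\<close> at the level of series: the Cauchy product of
  the exponential series of \<open>-c t\<close> with \<open>\<Sum>j. t ^ j / j! * b j\<close>.\<close>

lemma exp_weighted_binomial_sums:
  fixes b :: "nat \<Rightarrow> real"
  assumes bound: "\<And>j. \<bar>b j\<bar> \<le> K * C ^ j"
  shows "summable (\<lambda>j. t ^ j / fact j * b j)"
    and "(\<lambda>k. t ^ k / fact k * (\<Sum>j\<le>k. real (k choose j) * (-c) ^ (k - j) * b j))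
           sums (exp (-(c * t)) * (\<Sum>j. t ^ j / fact j * b j))"
proof -
  define A where "A j = t ^ j / fact j * b j" for j
  define D where "D i = t ^ i / fact i * (-c) ^ i" for i
  have "norm (norm (A n)) \<le> K * (inverse (fact n) * (C * \<bar>t\<bar>) ^ n)" for n
  proof -
    have "norm (norm (A n)) = \<bar>t\<bar> ^ n / fact n * \<bar>b n\<bar>"
      by (simp add: A_def abs_mult power_abs)
    also have "\<dots> \<le> \<bar>t\<bar> ^ n / fact n * (K * C ^ n)"
      by (rule mult_left_mono[OF bound]) simp
    finally show ?thesis by (simp add: power_mult_distrib divide_inverse mult_ac)
  qed
  then have sA: "summable (\<lambda>j. norm (A j))"
    by (intro summable_comparison_test[OF _ summable_mult[OF summable_exp]]) blast
  show "summable (\<lambda>j. t ^ j / fact j * b j)"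
    using summable_norm_cancel[OF sA] unfolding A_def .
  have sD: "summable (\<lambda>j. norm (D j))"
    using exp_sums_weighted_power[of "\<bar>t\<bar>" "\<bar>c\<bar>"]
    by (simp add: D_def sums_iff abs_mult power_abs)
  have D_sum: "(\<Sum>i. D i) = exp (-(c * t))"
    using exp_sums_weighted_power[of t "-c"] unfolding D_def by (simp add: sums_iff)
  have "(\<Sum>i\<le>k. A i * D (k - i))
      = t ^ k / fact k * (\<Sum>j\<le>k. real (k choose j) * (-c) ^ (k - j) * b j)" for k
  proof -
    have "A i * D (k - i) = t ^ k / fact k * (real (k choose i) * (-c) ^ (k - i) * b i)"
      if "i \<le> k" for i
    proof -
      have "t ^ k = t ^ i * t ^ (k - i)"
        using that by (simp add: power_add[symmetric])
      moreover have "real (k choose i) = fact k / (fact i * fact (k - i))"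
        using binomial_fact[OF that] by simp
      ultimately show ?thesis unfolding A_def D_def by (simp add: divide_simps)
    qed
    then show ?thesis by (simp add: sum_distrib_left)
  qed
  then show "(\<lambda>k. t ^ k / fact k * (\<Sum>j\<le>k. real (k choose j) * (-c) ^ (k - j) * b j))
           sums (exp (-(c * t)) * (\<Sum>j. t ^ j / fact j * b j))"
    using Cauchy_product_sums[OF sA sD] unfolding D_sum A_def by (simp add: mult.commute)
qed

definition lapS_exp :: "('v \<Rightarrow> 'v \<Rightarrow> real) \<Rightarrow> 'v set \<Rightarrow> real \<Rightarrow> ('v \<Rightarrow> real) \<Rightarrow> 'v \<Rightarrow> real" where
  "lapS_exp q S t g z = (\<Sum>k. t ^ k / fact k * (lapS q S ^^ k) g z)"

lemma heatS_eq_lapS_exp: "heatS q S t f = lapS_exp q S t (\<lambda>y. f y * indicator S y)"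
  by (rule ext) (simp add: heatS_def lapS_exp_def)

lemma funpow_lapS_eq_binomial_shift:
  "(lapS q S ^^ k) g z
     = (\<Sum>j\<le>k. real (k choose j) * (-c) ^ (k - j) * (shifted_lapS q S c ^^ j) g z)"
proof -
  have "(\<lambda>h z. lapS q S h z + c * h z) = shifted_lapS q S c"
    by (simp add: fun_eq_iff shifted_lapS_def)
  then show ?thesis
    using funpow_eq_binomial_shift[of "lapS q S" k g c] by (simp add: lapS_lin)
qed

lemma lapS_exp_sums_shifted:
  assumes deg: "\<forall>x\<in>S. deg q x \<le> c" and c: "0 \<le> c" and bound: "\<And>z. \<bar>g z\<bar> \<le> K"
  shows "summable (\<lambda>j. t ^ j / fact j * (shifted_lapS q S c ^^ j) g z)"
    and "(\<lambda>k. t ^ k / fact k * (lapS q S ^^ k) g z)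
           sums (exp (-(c * t)) * (\<Sum>j. t ^ j / fact j * (shifted_lapS q S c ^^ j) g z))"
proof -
  have "\<bar>(shifted_lapS q S c ^^ j) g z\<bar> \<le> K * c ^ j" for j
  proof -
    have "- K \<le> g z" "g z \<le> K" for z
      using bound[of z] by auto
    then have "c ^ j * - K \<le> (shifted_lapS q S c ^^ j) g z \<and> (shifted_lapS q S c ^^ j) g z \<le> c ^ j * K"
      by (rule funpow_shifted_lapS_between[OF deg c])
    then show ?thesis by (simp add: abs_le_iff mult.commute)
  qed
  note series = exp_weighted_binomial_sums[OF this]
  show "summable (\<lambda>j. t ^ j / fact j * (shifted_lapS q S c ^^ j) g z)"
    by (rule series(1))
  show "(\<lambda>k. t ^ k / fact k * (lapS q S ^^ k) g z)
          sums (exp (-(c * t)) * (\<Sum>j. t ^ j / fact j * (shifted_lapS q S c ^^ j) g z))"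
    unfolding funpow_lapS_eq_binomial_shift[of _ _ _ _ _ c] by (rule series(2))
qed

lemma lapS_exp_eq_shifted:
  assumes "\<forall>x\<in>S. deg q x \<le> c" and "0 \<le> c" and "\<And>z. \<bar>g z\<bar> \<le> K"
  shows "lapS_exp q S t g z
       = exp (-(c * t)) * (\<Sum>j. t ^ j / fact j * (shifted_lapS q S c ^^ j) g z)"
  using lapS_exp_sums_shifted(2)[OF assms] unfolding lapS_exp_def by (rule sums_unique[symmetric])

lemma lapS_exp_sums:
  assumes "finite S" and "\<And>z. \<bar>g z\<bar> \<le> K"
  shows "(\<lambda>k. t ^ k / fact k * (lapS q S ^^ k) g z) sums lapS_exp q S t g z"
proof -
  obtain c where c: "0 \<le> c" and deg: "\<forall>x\<in>S. deg q x \<le> c"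
    using finite_deg_bound[OF assms(1)] by blast
  have "summable (\<lambda>k. t ^ k / fact k * (lapS q S ^^ k) g z)"
    using lapS_exp_sums_shifted(2)[OF deg c assms(2), where t = t and z = z] by (rule sums_summable)
  then show ?thesis
    unfolding lapS_exp_def by (rule summable_sums)
qed

lemma lapS_exp_lin:
  assumes "finite S" and "\<And>z. \<bar>f z\<bar> \<le> K" and "\<And>z. \<bar>g z\<bar> \<le> K'"
  shows "lapS_exp q S t (\<lambda>z. a * f z + b * g z) z = a * lapS_exp q S t f z + b * lapS_exp q S t g z"
proof -
  have "(\<lambda>k. a * (t ^ k / fact k * (lapS q S ^^ k) f z) + b * (t ^ k / fact k * (lapS q S ^^ k) g z))
      sums (a * lapS_exp q S t f z + b * lapS_exp q S t g z)"
    by (intro sums_add sums_mult lapS_exp_sums[OF assms(1,2)] lapS_exp_sums[OF assms(1,3)])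
  then show ?thesis
    unfolding lapS_exp_def funpow_linear[of "lapS q S", OF lapS_lin]
    by (simp add: sums_iff algebra_simps)
qed

lemma lapS_exp_harmonic:
  assumes "\<And>x. lap q \<psi> x = 0"
  shows "lapS_exp q S t \<psi> z = \<psi> z"
proof -
  have "lapS q S \<psi> = (\<lambda>_. 0)"
    by (rule ext) (metis assms lapS_in lapS_out)
  moreover have "(lapS q S ^^ k) (\<lambda>_. 0) = (\<lambda>_. 0)" for k
    by (induction k) (simp_all add: lapS_def)
  ultimately have "(lapS q S ^^ Suc k) \<psi> = (\<lambda>_. 0)" for k
    by (simp only: funpow_Suc_right comp_def)
  then have "(\<lambda>k. t ^ k / fact k * (lapS q S ^^ k) \<psi> z) = (\<lambda>k. if k = 0 then \<psi> z else 0)"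
    by (intro ext, case_tac k) (simp_all del: funpow.simps)
  then show ?thesis
    unfolding lapS_exp_def using sums_single[of 0 "\<lambda>_. \<psi> z"] by (simp add: sums_iff)
qed

lemma lapS_exp_mono:
  assumes "finite S" and "0 \<le> t" and "\<And>z. \<bar>g z\<bar> \<le> K" and "\<And>z. \<bar>g' z\<bar> \<le> K'"
    and "\<And>z. g z \<le> g' z"
  shows "lapS_exp q S t g z \<le> lapS_exp q S t g' z"
proof -
  obtain c where c: "0 \<le> c" and deg: "\<forall>x\<in>S. deg q x \<le> c"
    using finite_deg_bound[OF assms(1)] by blast
  have "(\<Sum>j. t ^ j / fact j * (shifted_lapS q S c ^^ j) g z)
      \<le> (\<Sum>j. t ^ j / fact j * (shifted_lapS q S c ^^ j) g' z)"
    using assms(2,5)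
    by (intro suminf_le lapS_exp_sums_shifted(1)[OF deg c assms(3)]
        lapS_exp_sums_shifted(1)[OF deg c assms(4)] mult_left_mono funpow_shifted_lapS_mono[OF deg c])
      auto
  then show ?thesis
    unfolding lapS_exp_eq_shifted[OF deg c assms(3)] lapS_exp_eq_shifted[OF deg c assms(4)]
    by (simp add: mult_left_mono)
qed

lemma heatS_le_one:
  assumes "finite S" and "0 \<le> t" and "\<And>z. 0 \<le> f z" and "\<And>z. f z \<le> 1"
  shows "heatS q S t f z \<le> 1"
proof -
  have "lapS_exp q S t (\<lambda>y. f y * indicator S y) z \<le> lapS_exp q S t (\<lambda>_. 1) z"
    using assms by (intro lapS_exp_mono[where K = 1 and K' = 1]) (auto simp: indicator_def)
  then show ?thesis by (simp add: heatS_eq_lapS_exp lapS_exp_harmonic)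
qed

lemma heatS_mono_set:
  assumes "finite S'" and "S \<subseteq> S'" and "0 \<le> t" and "\<And>z. 0 \<le> f z" and "\<And>z. f z \<le> 1"
  shows "heatS q S t f z \<le> heatS q S' t f z"
proof -
  obtain c where c: "0 \<le> c" and deg': "\<forall>x\<in>S'. deg q x \<le> c"
    using finite_deg_bound[OF assms(1)] by blast
  have deg: "\<forall>x\<in>S. deg q x \<le> c"
    using deg' assms(2) by blast
  have bound: "\<bar>f z * indicator T z\<bar> \<le> 1" for T z
    using assms(4,5)[of z] by (simp add: indicator_def)
  have "(\<Sum>j. t ^ j / fact j * (shifted_lapS q S c ^^ j) (\<lambda>y. f y * indicator S y) z)
      \<le> (\<Sum>j. t ^ j / fact j * (shifted_lapS q S' c ^^ j) (\<lambda>y. f y * indicator S' y) z)"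
    using assms
    by (intro suminf_le lapS_exp_sums_shifted(1)[OF deg c bound] lapS_exp_sums_shifted(1)[OF deg' c bound]
        mult_left_mono funpow_shifted_lapS_subset_le[OF assms(2) deg' c])
      (auto simp: indicator_def)
  then show ?thesis
    unfolding heatS_eq_lapS_exp lapS_exp_eq_shifted[OF deg c bound] lapS_exp_eq_shifted[OF deg' c bound]
    by (simp add: mult_left_mono)
qed

lemma lapS_exp_complement:
  assumes "finite S"
  shows "lapS_exp q S t (\<lambda>z. 1 - indicator S z) z = 1 - heatS q S t (\<lambda>_. 1) z"
proof -
  have "lapS_exp q S t (\<lambda>z. 1 * 1 + (-1) * indicator S z) z
      = 1 * lapS_exp q S t (\<lambda>_. 1) z + (-1) * lapS_exp q S t (indicator S) z"
    using assms by (rule lapS_exp_lin[where K = 1 and K' = 1]) (simp_all add: indicator_def)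
  then show ?thesis by (simp add: heatS_eq_lapS_exp lapS_exp_harmonic)
qed

text \<open>A harmonic function bounded by \<open>M\<close> and nonpositive off \<open>W\<close> lies below
  \<open>M (1\<^sub>W 1\<^sub>S + 1 - 1\<^sub>S)\<close>, and \<open>exp (t \<Delta>\<^sub>S)\<close> preserves this inequality while fixing the
  harmonic function.\<close>

lemma harmonic_le_heatS:
  assumes S: "finite S" and t: "0 \<le> t" and harmonic: "\<And>x. lap q \<psi> x = 0"
    and bound: "\<And>x. \<bar>\<psi> x\<bar> \<le> M" and off_W: "\<And>x. x \<notin> W \<Longrightarrow> \<psi> x \<le> 0"
  shows "\<psi> p \<le> M * (heatS q S t (indicator W) p + 1 - heatS q S t (\<lambda>_. 1) p)"
proof -
  have M: "0 \<le> M"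
    using bound[of p] by linarith
  have "\<psi> p = lapS_exp q S t \<psi> p"
    by (simp add: lapS_exp_harmonic harmonic)
  also have "\<dots> \<le> lapS_exp q S t (\<lambda>z. M * (indicator W z * indicator S z) + M * (1 - indicator S z)) p"
  proof (rule lapS_exp_mono[OF S t bound])
    fix z
    show "\<bar>M * (indicator W z * indicator S z) + M * (1 - indicator S z)\<bar> \<le> M"
      using M by (simp add: indicator_def)
    show "\<psi> z \<le> M * (indicator W z * indicator S z) + M * (1 - indicator S z)"
      using bound[of z] off_W[of z] by (auto simp: indicator_def)
  qed
  also have "\<dots> = M * lapS_exp q S t (\<lambda>z. indicator W z * indicator S z) p
      + M * lapS_exp q S t (\<lambda>z. 1 - indicator S z) p"
    by (rule lapS_exp_lin[OF S, where K = 1 and K' = 1]) (simp_all add: indicator_def)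
  also have "\<dots> = M * heatS q S t (indicator W) p + M * (1 - heatS q S t (\<lambda>_. 1) p)"
    by (simp only: lapS_exp_complement[OF S] heatS_eq_lapS_exp)
  finally show ?thesis by (simp add: algebra_simps)
qed

lemma coupling_heatS_deficit_le:
  fixes q :: "'a \<Rightarrow> 'a \<Rightarrow> real" and qt :: "'a \<times> 'a \<Rightarrow> 'a \<times> 'a \<Rightarrow> real"
  assumes coupling: "coupling_graph q qt" and S: "finite S" and t: "0 \<le> t"
  shows "1 - heatS qt (S \<times> S) t (\<lambda>_. 1) p
       \<le> (1 - heatS q S t (\<lambda>_. 1) (fst p)) + (1 - heatS q S t (\<lambda>_. 1) (snd p))"
proof -
  obtain c1 where c1: "0 \<le> c1" and deg1: "\<forall>x\<in>S. deg q x \<le> c1"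
    using finite_deg_bound[OF S] by blast
  obtain c2 where c2: "0 \<le> c2" and deg2: "\<forall>r\<in>S \<times> S. deg qt r \<le> c2"
    using finite_deg_bound[of "S \<times> S"] S by blast
  define c where "c = c1 + c2"
  have c: "0 \<le> c" and deg: "\<forall>x\<in>S. deg q x \<le> c" and deg': "\<forall>r\<in>S \<times> S. deg qt r \<le> c"
    using c1 c2 deg1 deg2 unfolding c_def by (auto intro: add_increasing add_increasing2)
  define h :: "'a \<Rightarrow> real" where "h = (\<lambda>z. 1 - indicator S z)"
  define h' :: "'a \<times> 'a \<Rightarrow> real" where "h' = (\<lambda>r. 1 - indicator (S \<times> S) r)"
  define w :: "nat \<Rightarrow> real" where "w j = t ^ j / fact j" for j
  have h: "\<bar>h z\<bar> \<le> 1" and h': "\<bar>h' r\<bar> \<le> 1" for z r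
    by (simp_all add: h_def h'_def indicator_def)
  have w: "0 \<le> w j" for j
    using t by (simp add: w_def)
  have summable: "summable (\<lambda>j. w j * (shifted_lapS q S c ^^ j) h z)"
    "summable (\<lambda>j. w j * (shifted_lapS qt (S \<times> S) c ^^ j) h' r)" for z r
    unfolding w_def by (rule lapS_exp_sums_shifted(1)[OF deg c h] lapS_exp_sums_shifted(1)[OF deg' c h'])+
  have "w j * (shifted_lapS qt (S \<times> S) c ^^ j) h' p
      \<le> w j * ((shifted_lapS q S c ^^ j) h (fst p) + (shifted_lapS q S c ^^ j) h (snd p))" for j
    using funpow_shifted_lapS_coupling_le[OF coupling deg deg' c, of j p] w[of j]
    unfolding h_def h'_def by (rule mult_left_mono)
  then have "(\<Sum>j. w j * (shifted_lapS qt (S \<times> S) c ^^ j) h' p)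
      \<le> (\<Sum>j. w j * (shifted_lapS q S c ^^ j) h (fst p) + w j * (shifted_lapS q S c ^^ j) h (snd p))"
    by (intro suminf_le summable summable_add) (simp_all add: distrib_left)
  also have "\<dots> = (\<Sum>j. w j * (shifted_lapS q S c ^^ j) h (fst p))
      + (\<Sum>j. w j * (shifted_lapS q S c ^^ j) h (snd p))"
    by (intro suminf_add[symmetric] summable)
  finally have "lapS_exp qt (S \<times> S) t h' p \<le> lapS_exp q S t h (fst p) + lapS_exp q S t h (snd p)"
    unfolding lapS_exp_eq_shifted[OF deg c h] lapS_exp_eq_shifted[OF deg' c h'] w_def
    by (simp add: mult_left_mono flip: distrib_left)
  then show ?thesis
    using S by (simp add: h_def h'_def lapS_exp_complement del: indicator_simps)
qed

lemma exhaustion_exists: "\<exists>S :: nat \<Rightarrow> 'a::countable set. exhaustion S"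
proof
  let ?S = "\<lambda>i. {x :: 'a. to_nat x \<le> i}"
  have "finite (?S i)" for i
    using finite_vimageI[OF finite_atMost inj_to_nat, of i] by (simp add: vimage_def)
  moreover have "incseq ?S"
    unfolding incseq_def by auto
  ultimately show "exhaustion ?S"
    unfolding exhaustion_def by auto
qed

lemma exhaustion_some: "exhaustion (SOME S :: nat \<Rightarrow> 'a::countable set. exhaustion S)"
  by (rule someI_ex[OF exhaustion_exists])

lemma exhaustion_covers_finite:
  assumes "exhaustion E" and "finite A"
  shows "\<exists>j. A \<subseteq> E j"
  using assms(2)
proof (induction A rule: finite_induct)
  case empty
  then show ?case by simp
next
  case (insert a A)
  then obtain j where j: "A \<subseteq> E j" by blast
  obtain i where i: "a \<in> E i"
    using assms(1) unfolding exhaustion_def by blast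
  have "E i \<subseteq> E (max i j)" and "E j \<subseteq> E (max i j)"
    using assms(1) unfolding exhaustion_def incseq_def by simp_all
  then show ?case using i j by blast
qed

lemma heatS_exhaustion_tendsto_heat:
  fixes q :: "'a::countable \<Rightarrow> 'a \<Rightarrow> real"
  assumes t: "0 \<le> t" and f: "\<And>z. 0 \<le> f z" "\<And>z. f z \<le> 1"
  defines "E \<equiv> SOME S :: nat \<Rightarrow> 'a set. exhaustion S"
  shows "incseq (\<lambda>i. heatS q (E i) t f z)"
    and "(\<lambda>i. heatS q (E i) t f z) \<longlonglongrightarrow> heat q t f z"
proof -
  have fin: "finite (E i)" and inc: "incseq E" for i
    using exhaustion_some unfolding E_def exhaustion_def by auto
  show mono: "incseq (\<lambda>i. heatS q (E i) t f z)"
  proof (rule incseq_SucI)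
    fix i
    have "E i \<subseteq> E (Suc i)"
      using inc by (simp add: incseq_Suc_iff)
    then show "heatS q (E i) t f z \<le> heatS q (E (Suc i)) t f z"
      by (rule heatS_mono_set[OF fin _ t f])
  qed
  have "heatS q (E i) t f z \<le> 1" for i
    by (rule heatS_le_one[OF fin t f])
  then obtain L where L: "(\<lambda>i. heatS q (E i) t f z) \<longlonglongrightarrow> L"
    using incseq_convergent[OF mono] by blast
  moreover have "heat q t f z = L"
    unfolding heat_def E_def[symmetric] using L by (rule limI)
  ultimately show "(\<lambda>i. heatS q (E i) t f z) \<longlonglongrightarrow> heat q t f z" by simp
qed

lemma heatS_le_heat:
  fixes q :: "'a::countable \<Rightarrow> 'a \<Rightarrow> real"
  assumes S: "finite S" and t: "0 \<le> t" and f: "\<And>z. 0 \<le> f z" "\<And>z. f z \<le> 1"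
  shows "heatS q S t f z \<le> heat q t f z"
proof -
  define E where "E = (SOME S :: nat \<Rightarrow> 'a set. exhaustion S)"
  obtain j where "S \<subseteq> E j"
    using exhaustion_covers_finite[OF exhaustion_some S] unfolding E_def by blast
  moreover have "finite (E j)"
    using exhaustion_some unfolding E_def exhaustion_def by blast
  ultimately have "heatS q S t f z \<le> heatS q (E j) t f z"
    by (intro heatS_mono_set[OF _ _ t f])
  also have "\<dots> \<le> heat q t f z"
    unfolding E_def by (intro incseq_le heatS_exhaustion_tendsto_heat[OF t f])
  finally show ?thesis .
qed

lemma coupling_harmonic_nonpos:
  fixes q :: "'a::countable \<Rightarrow> 'a \<Rightarrow> real" and qt :: "'a \<times> 'a \<Rightarrow> 'a \<times> 'a \<Rightarrow> real"
  assumes stoch: "stoch_complete q" and coupling: "coupling_graph q qt"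
    and vanish: "((\<lambda>t. heat qt t (indicator W) p) \<longlongrightarrow> 0) at_top"
    and harmonic: "\<And>r. lap qt \<psi> r = 0" and bound: "\<And>r. \<bar>\<psi> r\<bar> \<le> M"
    and off_W: "\<And>r. r \<notin> W \<Longrightarrow> \<psi> r \<le> 0"
  shows "\<psi> p \<le> 0"
proof -
  have M: "0 \<le> M"
    using bound[of p] by linarith
  have le_heat: "\<psi> p \<le> M * heat qt t (indicator W) p" if t: "0 \<le> t" for t
  proof -
    define E where "E = (SOME S :: nat \<Rightarrow> 'a set. exhaustion S)"
    define loss where "loss i z = 1 - heatS q (E i) t (\<lambda>_. 1) z" for i z
    have "\<psi> p \<le> M * (heat qt t (indicator W) p + loss i (fst p) + loss i (snd p))" for i
    proof -
      have finE: "finite (E i)"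
        using exhaustion_some unfolding E_def exhaustion_def by blast
      then have fin: "finite (E i \<times> E i)" by blast
      have "heatS qt (E i \<times> E i) t (indicator W) p \<le> heat qt t (indicator W) p"
        by (rule heatS_le_heat[OF fin t]) (simp_all add: indicator_def)
      moreover have "1 - heatS qt (E i \<times> E i) t (\<lambda>_. 1) p \<le> loss i (fst p) + loss i (snd p)"
        using coupling_heatS_deficit_le[OF coupling finE t] unfolding loss_def .
      ultimately have "heatS qt (E i \<times> E i) t (indicator W) p + 1 - heatS qt (E i \<times> E i) t (\<lambda>_. 1) p
          \<le> heat qt t (indicator W) p + loss i (fst p) + loss i (snd p)"
        by linarith
      with harmonic_le_heatS[OF fin t harmonic bound off_W, where p = p] M show ?thesis
        by (meson mult_left_mono order_trans)
    qed
    moreover have "(\<lambda>i. loss i z) \<longlonglongrightarrow> 0" for z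
      using heatS_exhaustion_tendsto_heat(2)[OF t, of "\<lambda>_. 1" q z] stoch t
      unfolding loss_def E_def stoch_complete_def by (auto intro: tendsto_eq_intros)
    then have "(\<lambda>i. M * (heat qt t (indicator W) p + loss i (fst p) + loss i (snd p)))
        \<longlonglongrightarrow> M * (heat qt t (indicator W) p + 0 + 0)"
      by (intro tendsto_intros)
    ultimately show ?thesis
      by (intro LIMSEQ_le_const[where a = "\<psi> p"]) auto
  qed
  have "eventually (\<lambda>t. \<psi> p \<le> M * heat qt t (indicator W) p) at_top"
    using eventually_ge_at_top[of "0 :: real"] by (rule eventually_mono) (rule le_heat)
  then show ?thesis
    using tendsto_mult_right_zero[OF vanish, of M] by (intro tendsto_lowerbound) auto
qed

theorem mainTheorem14:
  fixes q :: "'v::countable \<Rightarrow> 'v \<Rightarrow> real"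
    and qt :: "'v \<times> 'v \<Rightarrow> 'v \<times> 'v \<Rightarrow> real"
    and \<phi> :: "'v \<Rightarrow> real"
  assumes "is_graph q" and "reversible q" and "stoch_complete q"
    and "coupling_graph q qt"
    and "\<forall>p. ((\<lambda>t. heat qt t (indicator (UNIV - {(x, x) | x. True})) p) \<longlongrightarrow> 0) at_top"
    and "bounded (range \<phi>)" and "lap q \<phi> = (\<lambda>_. 0)"
  shows "\<exists>c. \<forall>x. \<phi> x = c"
proof -
  obtain K where K: "\<And>x. \<bar>\<phi> x\<bar> \<le> K"
    using assms(6) by (auto simp: bounded_iff)
  have nonpos: "s * \<phi> (fst (x, y)) + (-s) * \<phi> (snd (x, y)) \<le> 0" if "\<bar>s\<bar> = 1" for s x y
  proof (rule coupling_harmonic_nonpos[OF assms(3,4) assms(5)[rule_format],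
        where \<psi> = "\<lambda>r. s * \<phi> (fst r) + (-s) * \<phi> (snd r)" and p = "(x, y)" and M = "2 * K"])
    show "lap qt (\<lambda>r. s * \<phi> (fst r) + (-s) * \<phi> (snd r)) r = 0" for r
      using coupling_graph_lap_lin[OF assms(4), of s \<phi> "-s" \<phi> r] assms(7) by simp
    show "\<bar>s * \<phi> (fst r) + (-s) * \<phi> (snd r)\<bar> \<le> 2 * K" for r
    proof -
      have "s = 1 \<or> s = -1"
        using that by (cases "0 \<le> s") auto
      then show ?thesis
        using K[of "fst r"] K[of "snd r"] by (elim disjE) (simp_all add: abs_le_iff)
    qed
    show "s * \<phi> (fst r) + (-s) * \<phi> (snd r) \<le> 0" if "r \<notin> UNIV - {(x, x) | x. True}" for r
      using that by auto
  qed
  have "\<phi> x = \<phi> y" for x y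
    using nonpos[of 1 x y] nonpos[of "-1" x y] by simp
  then show ?thesis by blast
qed

end
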